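(* Let $G=(V,E)$ be a finite undirected graph and let $\rho\in(0,1]$. Then the procedure $\textsc{CliqueAgg}(G,\rho)$ (described in the context) outputs an inclusion-maximal $\rho$-dense aggregator of $G$.
   Context: For a graph with $n'\ge 2$ vertices and $m'$ edges its density is $m'/\binom{n'}{2}$; a graph with one vertex has density $1$. For $v\in V$, $N_G(v)$ is the neighborhood of $v$. A degeneracy ordering of a graph is obtained by repeatedly removing a minimum-degree vertex of the remaining graph (ties broken by vertex id); the order of removal is the ordering. A $\rho$-dense aggregator of $G$ is a collection of nonempty vertex sets $S_1,\dots,S_k\subseteq V$ such that (1) every clique $K$ of $G$ satisfies $K\subseteq S_i$ for some $i$, and (2) every induced subgraph $G[S_i]$ has density at least $\rho$. It is inclusion-maximal if there are no distinct $S_i,S_j$ in it with $S_i\subseteq S_j$. The procedure $\textsc{CliqueAgg}(G,\rho)$ returns $\textsc{Rec}(H=V, C=\emptyset, X=\emptyset)$, where $\textsc{Rec}(H,C,X)$ (with $H,C,X\subseteq V$) does the following. (1) If some $x\in X$ satisfies $H\subseteq N_G(x)$, return $\emptyset$. (2) If $G[C\cup H]$ has density at least $\rho$, return $\{C\cup H\}$. (3) Otherwise set $S:=\emptyset$, $\hat H:=H$, $\hat X:=X$, compute a degeneracy ordering of $G[H]$, and for each $v\in H$ in this order: set $H_v:=N_G(v)\cap\hat H$, $C_v:=C\cup\{v\}$, $X_v:=\hat X\cap N_G(v)$; set $S:=S\cup\textsc{Rec}(H_v,C_v,X_v)$; set $\hat H:=\hat H\setminus\{v\}$ and $\hat X:=\hat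 X\cup\{v\}$; if some $x\in\hat X$ satisfies $\hat H\subseteq N_G(x)$, return $S$; if $G[C\cup\hat H]$ has density at least $\rho$, return $S\cup\{C\cup\hat H\}$. (4) After the loop, return $S$. *)

theory Defs
  imports Complex_Main
begin

definition simple_graph :: "'a set \<Rightarrow> ('a \<Rightarrow> 'a \<Rightarrow> bool) \<Rightarrow> bool" where
  "simple_graph V E \<longleftrightarrow> finite V \<and> (\<forall>u v. E u v \<longrightarrow> E v u) \<and> (\<forall>u. \<not> E u u)
     \<and> (\<forall>u v. E u v \<longrightarrow> u \<in> V \<and> v \<in> V)"

definition nbhd :: "'a set \<Rightarrow> ('a \<Rightarrow> 'a \<Rightarrow> bool) \<Rightarrow> 'a \<Rightarrow> 'a set" where
  "nbhd V E v = {u \<in> V. E v u}"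

definition edges_in :: "('a \<Rightarrow> 'a \<Rightarrow> bool) \<Rightarrow> 'a set \<Rightarrow> 'a set set" where
  "edges_in E S = {{u, v} | u v. u \<in> S \<and> v \<in> S \<and> E u v}"

definition density :: "('a \<Rightarrow> 'a \<Rightarrow> bool) \<Rightarrow> 'a set \<Rightarrow> real" where
  "density E S = (if card S \<ge> 2 then real (card (edges_in E S)) / real (card S choose 2) else 1)"

definition deg_in :: "('a \<Rightarrow> 'a \<Rightarrow> bool) \<Rightarrow> 'a set \<Rightarrow> 'a \<Rightarrow> nat" where
  "deg_in E H v = card {u \<in> H. E v u}"

definition min_deg_vertex :: "('a::linorder \<Rightarrow> 'a \<Rightarrow> bool) \<Rightarrow> 'a set \<Rightarrow> 'a" where
  "min_deg_vertex E H = Min {v \<in> H. deg_in E H v = Min (deg_in E H ` H)}"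

lemma min_deg_vertex_in:
  assumes "finite H" "H \<noteq> {}"
  shows "min_deg_vertex E H \<in> H"
proof -
  have "Min (deg_in E H ` H) \<in> deg_in E H ` H" using assms by simp
  then have ne: "{v \<in> H. deg_in E H v = Min (deg_in E H ` H)} \<noteq> {}" by auto
  have "finite {v \<in> H. deg_in E H v = Min (deg_in E H ` H)}" using assms by simp
  from Min_in[OF this ne] show ?thesis unfolding min_deg_vertex_def by simp
qed

function degen_order :: "('a::linorder \<Rightarrow> 'a \<Rightarrow> bool) \<Rightarrow> 'a set \<Rightarrow> 'a list" where
  "degen_order E H =
     (if finite H \<and> H \<noteq> {} then
        min_deg_vertex E H # degen_order E (H - {min_deg_vertex E H})
      else [])"
  by auto
termination
  by (relation "measure (\<lambda>(E, H). card H)")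
     (auto intro: card_Diff1_less min_deg_vertex_in)

(* Rec(H, C, X), with a recursion-depth bound n (fuel).  Every nested call of Rec
   strictly shrinks H, so fuel card V + 1 never runs out on the top-level call;
   rec_loop implements the for-loop of step (3), processing the remaining vertices
   of the degeneracy ordering with current S, \<hat>H, \<hat>X. *)
function rec_agg :: "nat \<Rightarrow> 'a set \<Rightarrow> ('a::linorder \<Rightarrow> 'a \<Rightarrow> bool) \<Rightarrow> real
      \<Rightarrow> 'a set \<Rightarrow> 'a set \<Rightarrow> 'a set \<Rightarrow> 'a set set"
and rec_loop :: "nat \<Rightarrow> 'a set \<Rightarrow> ('a::linorder \<Rightarrow> 'a \<Rightarrow> bool) \<Rightarrow> real
      \<Rightarrow> 'a set \<Rightarrow> 'a list \<Rightarrow> 'a set \<Rightarrow> 'a set \<Rightarrow> 'a set set \<Rightarrow> 'a set set" where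
  "rec_agg 0 V E \<rho> H C X = {}"
| "rec_agg (Suc n) V E \<rho> H C X =
     (if \<exists>x \<in> X. H \<subseteq> nbhd V E x then {}
      else if density E (C \<union> H) \<ge> \<rho> then {C \<union> H}
      else rec_loop n V E \<rho> C (degen_order E H) H X {})"
| "rec_loop n V E \<rho> C [] Hh Xh S = S"
| "rec_loop n V E \<rho> C (v # vs) Hh Xh S =
     (let S' = S \<union> rec_agg n V E \<rho> (nbhd V E v \<inter> Hh) (insert v C) (Xh \<inter> nbhd V E v);
          Hh' = Hh - {v};
          Xh' = insert v Xh
      in if \<exists>x \<in> Xh'. Hh' \<subseteq> nbhd V E x then S'
         else if density E (C \<union> Hh') \<ge> \<rho> then S' \<union> {C \<union> Hh'}
         else rec_loop n V E \<rho> C vs Hh' Xh' S')"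
  by pat_completeness auto
termination
  by (relation "measures [\<lambda>x. case x of Inl (n, _) \<Rightarrow> n | Inr (n, _) \<Rightarrow> n,
                          \<lambda>x. case x of Inl _ \<Rightarrow> 0 | Inr (n, V, E, r, C, vs, _) \<Rightarrow> length vs]") auto

definition clique_agg :: "'a set \<Rightarrow> ('a::linorder \<Rightarrow> 'a \<Rightarrow> bool) \<Rightarrow> real \<Rightarrow> 'a set set" where
  "clique_agg V E \<rho> = rec_agg (card V + 1) V E \<rho> V {} {}"

definition is_clique :: "'a set \<Rightarrow> ('a \<Rightarrow> 'a \<Rightarrow> bool) \<Rightarrow> 'a set \<Rightarrow> bool" where
  "is_clique V E K \<longleftrightarrow> K \<noteq> {} \<and> K \<subseteq> V \<and> (\<forall>u \<in> K. \<forall>v \<in> K. u \<noteq> v \<longrightarrow> E u v)"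

definition dense_aggregator ::
  "'a set \<Rightarrow> ('a \<Rightarrow> 'a \<Rightarrow> bool) \<Rightarrow> real \<Rightarrow> 'a set set \<Rightarrow> bool" where
  "dense_aggregator V E \<rho> \<S> \<longleftrightarrow>
     (\<forall>S \<in> \<S>. S \<noteq> {} \<and> S \<subseteq> V) \<and>
     (\<forall>K. is_clique V E K \<longrightarrow> (\<exists>S \<in> \<S>. K \<subseteq> S)) \<and>
     (\<forall>S \<in> \<S>. density E S \<ge> \<rho>)"

definition inclusion_maximal :: "'a set set \<Rightarrow> bool" where
  "inclusion_maximal \<S> \<longleftrightarrow> (\<forall>S \<in> \<S>. \<forall>T \<in> \<S>. S \<noteq> T \<longrightarrow> \<not> S \<subseteq> T)"

end

theory Submission
  imports Defs
begin

(* A call Rec(H, C, X) only ever outputs sets S with C \<subseteq> S \<subseteq> C \<union> H that are \<rho>-dense and such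
   that no excluded vertex x \<in> X is adjacent to all of S - C.  Everything the branch of a
   processed vertex u outputs contains u and lies in C \<union> N[u]; as u is excluded from all later
   branches, these two facts make outputs of different branches incomparable, which gives
   inclusion-maximality.  Conversely, a clique K \<supseteq> C that no vertex of H \<union> X can extend is
   followed into the branch of its first vertex in the degeneracy ordering; the recursion can
   only stop early by outputting a superset of K, since cliques have density 1 \<ge> \<rho>.  Every
   clique of G extends to a maximal one, which the top-level call therefore covers. *)

declare degen_order.simps[simp del]

lemma set_degen_order: "finite H \<Longrightarrow> set (degen_order E H) = H"
proof (induction E H rule: degen_order.induct)
  case (1 E H)
  then show ?case
    using min_deg_vertex_in[of H E] by (auto simp: degen_order.simps[of E H])
qed

lemma distinct_degen_order: "finite H \<Longrightarrow> distinct (degen_order E H)"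
proof (induction E H rule: degen_order.induct)
  case (1 E H)
  then show ?case
    using set_degen_order[of "H - {min_deg_vertex E H}" E] by (auto simp: degen_order.simps[of E H])
qed

lemma density_clique:
  assumes "simple_graph V E" "is_clique V E K"
  shows "density E K = 1"
proof (cases "card K \<ge> 2")
  case True
  have "finite K" using assms finite_subset unfolding simple_graph_def is_clique_def by blast
  have "edges_in E K = {e. e \<subseteq> K \<and> card e = 2}"
  proof (intro equalityI subsetI)
    fix e assume "e \<in> edges_in E K"
    then obtain u w where "e = {u, w}" "u \<in> K" "w \<in> K" "E u w"
      unfolding edges_in_def by blast
    moreover have "u \<noteq> w"
      using \<open>E u w\<close> assms(1) unfolding simple_graph_def by blast
    ultimately show "e \<in> {e. e \<subseteq> K \<and> card e = 2}" by auto
  next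
    fix e assume "e \<in> {e. e \<subseteq> K \<and> card e = 2}"
    then obtain u w where "e = {u, w}" "u \<noteq> w" "u \<in> K" "w \<in> K"
      by (auto simp: card_2_iff)
    then show "e \<in> edges_in E K"
      using assms(2) unfolding edges_in_def is_clique_def by blast
  qed
  then have "card (edges_in E K) = card K choose 2"
    using n_subsets[OF \<open>finite K\<close>] by simp
  then show ?thesis
    using True by (simp add: density_def)
qed (simp add: density_def)

lemma nbhd_sym: "simple_graph V E \<Longrightarrow> u \<in> nbhd V E v \<longleftrightarrow> v \<in> nbhd V E u"
  unfolding simple_graph_def nbhd_def by blast

(* For a set K \<supseteq> C such that every vertex of A is adjacent to all of C, a vertex y \<in> A - K
   extends the clique K iff it is adjacent to all of K - C. *)
definition unextendable_by :: "'a set \<Rightarrow> ('a \<Rightarrow> 'a \<Rightarrow> bool) \<Rightarrow> 'a set \<Rightarrow> 'a set \<Rightarrow> 'a set \<Rightarrow> bool" where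
  "unextendable_by V E C A K \<longleftrightarrow> (\<forall>y \<in> A - K. \<not> K - C \<subseteq> nbhd V E y)"

lemma unextendable_byD:
  "unextendable_by V E C A K \<Longrightarrow> y \<in> A \<Longrightarrow> y \<notin> K \<Longrightarrow> K - C \<subseteq> nbhd V E y \<Longrightarrow> False"
  unfolding unextendable_by_def by blast

lemma clique_extends_to_maximal:
  assumes "simple_graph V E" "is_clique V E K"
  obtains M where "K \<subseteq> M" "is_clique V E M" "unextendable_by V E {} V M"
proof -
  have "finite {M. is_clique V E M}"
    using assms(1) unfolding simple_graph_def is_clique_def
    by (metis (no_types, lifting) Collect_mono Pow_def finite_Pow_iff finite_subset)
  then obtain M where M: "is_clique V E M" "K \<subseteq> M"
    and max: "\<And>M'. is_clique V E M' \<Longrightarrow> M \<subseteq> M' \<Longrightarrow> M = M'"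
    using finite_has_maximal2[of "{M. is_clique V E M}" K] assms(2) by auto
  have "\<not> M \<subseteq> nbhd V E y" if "y \<in> V - M" for y
  proof
    assume "M \<subseteq> nbhd V E y"
    then have "is_clique V E (insert y M)"
      using M(1) that assms(1) unfolding is_clique_def simple_graph_def nbhd_def by blast
    then show False
      using max[of "insert y M"] that by blast
  qed
  then show ?thesis
    using that M unfolding unextendable_by_def by simp
qed

section \<open>Soundness and inclusion-maximality\<close>

lemma rec_loop_mono: "S \<subseteq> rec_loop n V E \<rho> C vs Hh Xh S"
proof (induction vs arbitrary: Hh Xh S)
  case (Cons v vs)
  show ?case
    using Cons[of "S \<union> rec_agg n V E \<rho> (nbhd V E v \<inter> Hh) (insert v C) (Xh \<inter> nbhd V E v)"]
    by (auto simp: Let_def)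
qed simp

lemma rec_loop_Cons_eq:
  assumes "R = rec_agg n V E \<rho> (nbhd V E v \<inter> Hh) (insert v C) (Xh \<inter> nbhd V E v)"
  shows "rec_loop n V E \<rho> C (v # vs) Hh Xh S =
    (if \<exists>x \<in> insert v Xh. Hh - {v} \<subseteq> nbhd V E x then S \<union> R
     else if \<rho> \<le> density E (C \<union> (Hh - {v})) then S \<union> R \<union> {C \<union> (Hh - {v})}
     else rec_loop n V E \<rho> C vs (Hh - {v}) (insert v Xh) (S \<union> R))"
  using assms by (simp add: Let_def)

lemma rec_loop_Cons_supset:
  "S \<union> rec_agg n V E \<rho> (nbhd V E v \<inter> Hh) (insert v C) (Xh \<inter> nbhd V E v)
     \<subseteq> rec_loop n V E \<rho> C (v # vs) Hh Xh S"
proof -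
  let ?S' = "S \<union> rec_agg n V E \<rho> (nbhd V E v \<inter> Hh) (insert v C) (Xh \<inter> nbhd V E v)"
  have "?S' \<subseteq> rec_loop n V E \<rho> C vs (Hh - {v}) (insert v Xh) ?S'"
    by (rule rec_loop_mono)
  then show ?thesis
    unfolding rec_loop_Cons_eq[OF refl] by (simp add: subset_insertI2)
qed

lemma inclusion_maximal_Un:
  assumes "inclusion_maximal \<A>" "inclusion_maximal \<B>"
    and "\<And>A B. A \<in> \<A> \<Longrightarrow> B \<in> \<B> \<Longrightarrow> \<not> A \<subseteq> B \<and> \<not> B \<subseteq> A"
  shows "inclusion_maximal (\<A> \<union> \<B>)"
  using assms unfolding inclusion_maximal_def by blast

(* The invariant of a call Rec(H, C, X), and of the loop state (\<hat>H, \<hat>X) inside it. *)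
definition valid_state :: "'a set \<Rightarrow> ('a \<Rightarrow> 'a \<Rightarrow> bool) \<Rightarrow> 'a set \<Rightarrow> 'a set \<Rightarrow> 'a set \<Rightarrow> bool" where
  "valid_state V E C H X \<longleftrightarrow> simple_graph V E \<and> C \<subseteq> V \<and> H \<subseteq> V \<and> X \<subseteq> V \<and> H \<inter> X = {}
     \<and> (\<forall>y \<in> H \<union> X. \<forall>c \<in> C. E y c)"

lemma valid_state_disjoint:
  "valid_state V E C H X \<Longrightarrow> C \<inter> H = {} \<and> C \<inter> X = {} \<and> H \<inter> X = {}"
  unfolding valid_state_def simple_graph_def by blast

lemma valid_state_simple_graph: "valid_state V E C H X \<Longrightarrow> simple_graph V E"
  unfolding valid_state_def by blast

lemma valid_state_finite: "valid_state V E C H X \<Longrightarrow> finite H"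
  unfolding valid_state_def simple_graph_def using finite_subset by blast

lemma valid_state_branch:
  "valid_state V E C H X \<Longrightarrow> v \<in> H \<Longrightarrow>
     valid_state V E (insert v C) (nbhd V E v \<inter> H) (X \<inter> nbhd V E v)"
  unfolding valid_state_def simple_graph_def nbhd_def by blast

lemma valid_state_exclude:
  "valid_state V E C H X \<Longrightarrow> v \<in> H \<Longrightarrow> valid_state V E C (H - {v}) (insert v X)"
  unfolding valid_state_def by blast

(* The sets a call Rec(H, C, X) may output; the last condition is what keeps the outputs of
   different branches incomparable. *)
definition admissible :: "'a set \<Rightarrow> ('a \<Rightarrow> 'a \<Rightarrow> bool) \<Rightarrow> real \<Rightarrow> 'a set \<Rightarrow> 'a set \<Rightarrow> 'a set
    \<Rightarrow> 'a set \<Rightarrow> bool" where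
  "admissible V E \<rho> C H X S \<longleftrightarrow> C \<subseteq> S \<and> S \<subseteq> C \<union> H \<and> S \<noteq> {} \<and> \<rho> \<le> density E S
     \<and> (\<forall>x \<in> X. \<not> S - C \<subseteq> nbhd V E x)"

definition sound_output :: "'a set \<Rightarrow> ('a \<Rightarrow> 'a \<Rightarrow> bool) \<Rightarrow> real \<Rightarrow> 'a set \<Rightarrow> 'a set \<Rightarrow> 'a set
    \<Rightarrow> 'a set set \<Rightarrow> bool" where
  "sound_output V E \<rho> C H X \<S> \<longleftrightarrow> (\<forall>S \<in> \<S>. admissible V E \<rho> C H X S) \<and> inclusion_maximal \<S>"

definition pivoted :: "'a set \<Rightarrow> ('a \<Rightarrow> 'a \<Rightarrow> bool) \<Rightarrow> 'a set \<Rightarrow> 'a set \<Rightarrow> 'a set set \<Rightarrow> bool" where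
  "pivoted V E C X \<S> \<longleftrightarrow> (\<forall>T \<in> \<S>. \<exists>u \<in> X. u \<in> T \<and> T \<subseteq> insert u (C \<union> nbhd V E u))"

lemma admissible_branch_lift:
  assumes "valid_state V E C Hh Xh" "v \<in> Hh" "Hh \<subseteq> H" "X \<subseteq> Xh"
    and U: "admissible V E \<rho> (insert v C) (nbhd V E v \<inter> Hh) (Xh \<inter> nbhd V E v) U"
  shows "admissible V E \<rho> C H X U"
proof -
  have "\<not> U - C \<subseteq> nbhd V E x" if "x \<in> X" for x
  proof
    assume dom: "U - C \<subseteq> nbhd V E x"
    have "v \<in> U - C"
      using assms(2) valid_state_disjoint[OF assms(1)] U unfolding admissible_def by blast
    then have "x \<in> nbhd V E v"
      using dom nbhd_sym[OF valid_state_simple_graph[OF assms(1)], of x v] by blast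
    moreover have "U - insert v C \<subseteq> nbhd V E x"
      using dom by blast
    ultimately show False
      using U that assms(4) unfolding admissible_def by blast
  qed
  then show ?thesis
    using U assms(2,3) unfolding admissible_def by blast
qed

lemma admissible_branch_incomparable:
  assumes "valid_state V E C Hh Xh" "v \<in> Hh"
    and u: "u \<in> Xh" "u \<in> T" "T \<subseteq> insert u (C \<union> nbhd V E u)"
    and U: "admissible V E \<rho> (insert v C) (nbhd V E v \<inter> Hh) (Xh \<inter> nbhd V E v) U"
  shows "\<not> T \<subseteq> U \<and> \<not> U \<subseteq> T"
proof
  have "u \<notin> C" "u \<noteq> v" "u \<notin> Hh"
    using assms(2) u(1) valid_state_disjoint[OF assms(1)] by blast+
  moreover have "U \<subseteq> insert v C \<union> Hh"
    using U unfolding admissible_def by blast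
  ultimately have "u \<notin> U" by blast
  then show "\<not> T \<subseteq> U"
    using u(2) by blast
  (* If U \<subseteq> T then v \<in> N(u), so u was passed to the branch of v as an excluded vertex. *)
  show "\<not> U \<subseteq> T"
  proof
    assume "U \<subseteq> T"
    then have "U - insert v C \<subseteq> nbhd V E u"
      using u(3) \<open>u \<notin> U\<close> by blast
    have "v \<notin> C" "v \<in> U"
      using assms(2) valid_state_disjoint[OF assms(1)] U unfolding admissible_def by blast+
    then have "v \<in> nbhd V E u"
      using \<open>U \<subseteq> T\<close> u(3) \<open>u \<noteq> v\<close> by blast
    then have "u \<in> nbhd V E v"
      using nbhd_sym[OF valid_state_simple_graph[OF assms(1)], of u v] by blast
    then show False
      using U u(1) \<open>U - insert v C \<subseteq> nbhd V E u\<close> unfolding admissible_def by blast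
  qed
qed

lemma admissible_remainder:
  assumes "valid_state V E C H' X'" "H' \<subseteq> H" "X \<subseteq> X'" "C \<union> H' \<noteq> {}"
    and undominated: "\<forall>x \<in> X'. \<not> H' \<subseteq> nbhd V E x" and dense: "\<rho> \<le> density E (C \<union> H')"
  shows "admissible V E \<rho> C H X (C \<union> H')"
proof -
  have "C \<union> H' - C = H'"
    using valid_state_disjoint[OF assms(1)] by blast
  then show ?thesis
    using assms(2-4) undominated dense unfolding admissible_def by (simp add: subset_iff)
qed

lemma remainder_incomparable:
  assumes "valid_state V E C H' X'" "\<forall>x \<in> X'. \<not> H' \<subseteq> nbhd V E x"
    and "pivoted V E C X' \<S>" "T \<in> \<S>"
  shows "\<not> T \<subseteq> C \<union> H' \<and> \<not> C \<union> H' \<subseteq> T"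
proof -
  obtain u where u: "u \<in> X'" "u \<in> T" "T \<subseteq> insert u (C \<union> nbhd V E u)"
    using assms(3,4) unfolding pivoted_def by blast
  have "u \<notin> C \<union> H'"
    using u(1) valid_state_disjoint[OF assms(1)] by blast
  then have "C \<union> H' \<subseteq> T \<Longrightarrow> H' \<subseteq> nbhd V E u"
    using u(3) valid_state_disjoint[OF assms(1)] by blast
  then show ?thesis
    using \<open>u \<notin> C \<union> H'\<close> u assms(2) by blast
qed

lemma sound_output_branch_step:
  assumes "valid_state V E C Hh Xh" "v \<in> Hh" "Hh \<subseteq> H" "X \<subseteq> Xh"
    and \<S>: "sound_output V E \<rho> C H X \<S>" "pivoted V E C Xh \<S>"
    and \<R>: "sound_output V E \<rho> (insert v C) (nbhd V E v \<inter> Hh) (Xh \<inter> nbhd V E v) \<R>"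
  shows "sound_output V E \<rho> C H X (\<S> \<union> \<R>) \<and> pivoted V E C (insert v Xh) (\<S> \<union> \<R>)"
proof
  have "inclusion_maximal (\<S> \<union> \<R>)"
  proof (rule inclusion_maximal_Un)
    fix T U assume "T \<in> \<S>" "U \<in> \<R>"
    then obtain u where "u \<in> Xh" "u \<in> T" "T \<subseteq> insert u (C \<union> nbhd V E u)"
      using \<S>(2) unfolding pivoted_def by blast
    moreover have "admissible V E \<rho> (insert v C) (nbhd V E v \<inter> Hh) (Xh \<inter> nbhd V E v) U"
      using \<R> \<open>U \<in> \<R>\<close> unfolding sound_output_def by blast
    ultimately show "\<not> T \<subseteq> U \<and> \<not> U \<subseteq> T"
      by (rule admissible_branch_incomparable[OF assms(1,2)])
  qed (use \<S> \<R> in \<open>simp_all add: sound_output_def\<close>)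
  moreover have "admissible V E \<rho> C H X U" if "U \<in> \<R>" for U
    using \<R> that unfolding sound_output_def by (blast intro: admissible_branch_lift[OF assms(1-4)])
  ultimately show "sound_output V E \<rho> C H X (\<S> \<union> \<R>)"
    using \<S>(1) unfolding sound_output_def by blast
  have "v \<in> U \<and> U \<subseteq> insert v (C \<union> nbhd V E v)" if "U \<in> \<R>" for U
    using \<R> that unfolding sound_output_def admissible_def by blast
  then show "pivoted V E C (insert v Xh) (\<S> \<union> \<R>)"
    using \<S>(2) unfolding pivoted_def by blast
qed

lemma sound_output_insert_remainder:
  assumes "valid_state V E C H' X'" "H' \<subseteq> H" "X \<subseteq> X'" "X' \<noteq> {}"
    and undominated: "\<forall>x \<in> X'. \<not> H' \<subseteq> nbhd V E x" and dense: "\<rho> \<le> density E (C \<union> H')"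
    and \<S>: "sound_output V E \<rho> C H X \<S>" "pivoted V E C X' \<S>"
  shows "sound_output V E \<rho> C H X (\<S> \<union> {C \<union> H'})"
proof -
  have "H' \<noteq> {}"
    using assms(4) undominated by blast
  then have "admissible V E \<rho> C H X (C \<union> H')"
    using admissible_remainder[OF assms(1-3) _ undominated dense] by blast
  moreover have "inclusion_maximal (\<S> \<union> {C \<union> H'})"
    using \<S> remainder_incomparable[OF assms(1) undominated \<S>(2)]
    by (intro inclusion_maximal_Un) (auto simp: sound_output_def inclusion_maximal_def)
  ultimately show ?thesis
    using \<S>(1) unfolding sound_output_def by blast
qed

(* In the loop, Hh and Xh are \<hat>H and \<hat>X, while H0 and X0 are the sets H and X of the
   enclosing call. *)
lemma rec_agg_sound:
  shows "valid_state V E C H X \<Longrightarrow> C \<union> H \<noteq> {} \<Longrightarrow>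
      sound_output V E \<rho> C H X (rec_agg n V E \<rho> H C X)"
    and "valid_state V E C Hh Xh \<Longrightarrow> distinct vs \<Longrightarrow> set vs \<subseteq> Hh \<Longrightarrow> Hh \<subseteq> H0 \<Longrightarrow> X0 \<subseteq> Xh \<Longrightarrow>
      sound_output V E \<rho> C H0 X0 S \<Longrightarrow> pivoted V E C Xh S \<Longrightarrow>
      sound_output V E \<rho> C H0 X0 (rec_loop n V E \<rho> C vs Hh Xh S)"
proof (induction n V E \<rho> H C X and n V E \<rho> C vs Hh Xh S arbitrary: and H0 X0
    rule: rec_agg_rec_loop.induct)
  case (1 V E \<rho> H C X)
  then show ?case by (simp add: sound_output_def inclusion_maximal_def)
next
  case (2 n V E \<rho> H C X)
  show ?case
  proof (cases "(\<exists>x \<in> X. H \<subseteq> nbhd V E x) \<or> \<rho> \<le> density E (C \<union> H)")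
    case True
    then show ?thesis
      using admissible_remainder[OF "2.prems"(1) subset_refl subset_refl "2.prems"(2)]
      by (auto simp: sound_output_def inclusion_maximal_def)
  next
    case False
    note finite_H = valid_state_finite[OF "2.prems"(1)]
    have "sound_output V E \<rho> C H X (rec_loop n V E \<rho> C (degen_order E H) H X {})"
      using False "2.prems"(1) set_degen_order[OF finite_H] distinct_degen_order[OF finite_H]
      by (intro "2.IH") (auto simp: sound_output_def pivoted_def inclusion_maximal_def)
    then show ?thesis
      using False by simp
  qed
next
  case (3 n V E \<rho> C Hh Xh S)
  then show ?case by simp
next
  case (4 n V E \<rho> C v vs Hh Xh S)
  define R where "R = rec_agg n V E \<rho> (nbhd V E v \<inter> Hh) (insert v C) (Xh \<inter> nbhd V E v)"
  have v: "v \<in> Hh"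
    using "4.prems"(3) by simp
  have "sound_output V E \<rho> (insert v C) (nbhd V E v \<inter> Hh) (Xh \<inter> nbhd V E v) R"
    unfolding R_def using "4.IH"(1) valid_state_branch[OF "4.prems"(1) v] by blast
  then have SR: "sound_output V E \<rho> C H0 X0 (S \<union> R)" "pivoted V E C (insert v Xh) (S \<union> R)"
    using sound_output_branch_step[OF "4.prems"(1) v "4.prems"(4,5,6,7)] by blast+
  have state': "valid_state V E C (Hh - {v}) (insert v Xh)"
    using valid_state_exclude[OF "4.prems"(1) v] .
  note step = rec_loop_Cons_eq[OF R_def, of vs S]
  consider (dominated) "\<exists>x \<in> insert v Xh. Hh - {v} \<subseteq> nbhd V E x"
    | (dense) "\<forall>x \<in> insert v Xh. \<not> Hh - {v} \<subseteq> nbhd V E x" "\<rho> \<le> density E (C \<union> (Hh - {v}))"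
    | (continue) "\<forall>x \<in> insert v Xh. \<not> Hh - {v} \<subseteq> nbhd V E x" "\<not> \<rho> \<le> density E (C \<union> (Hh - {v}))"
    by blast
  then show ?case
  proof cases
    case dominated
    then show ?thesis
      using step SR(1) by simp
  next
    case dense
    have "Hh - {v} \<subseteq> H0" "X0 \<subseteq> insert v Xh"
      using "4.prems"(4,5) by blast+
    then show ?thesis
      using step dense sound_output_insert_remainder[OF state' _ _ _ dense(1,2) SR] by simp
  next
    case continue
    have "sound_output V E \<rho> C H0 X0 (rec_loop n V E \<rho> C vs (Hh - {v}) (insert v Xh) (S \<union> R))"
      unfolding R_def using "4.prems" state' SR[unfolded R_def] continue
      by (intro "4.IH"(2)[OF refl refl refl]) auto
    then show ?thesis
      using step continue by simp
  qed
qed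

section \<open>Every clique is covered\<close>

lemma unextendable_by_branch:
  assumes "simple_graph V E" "unextendable_by V E C A K" "B \<subseteq> nbhd V E v \<inter> A"
  shows "unextendable_by V E (insert v C) B K"
  unfolding unextendable_by_def
proof (intro ballI notI)
  fix y assume y: "y \<in> B - K" and dom: "K - insert v C \<subseteq> nbhd V E y"
  have "v \<in> nbhd V E y"
    using y assms(3) nbhd_sym[OF assms(1), of y v] by blast
  then have "K - C \<subseteq> nbhd V E y"
    using dom by blast
  then show False
    using y assms(2,3) unfolding unextendable_by_def by blast
qed

lemma clique_subset_branch:
  assumes "is_clique V E K" "v \<in> K" "K \<subseteq> C \<union> H"
  shows "K \<subseteq> insert v C \<union> (nbhd V E v \<inter> H)"
proof
  fix k assume k: "k \<in> K"
  show "k \<in> insert v C \<union> (nbhd V E v \<inter> H)"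
  proof (cases "k = v \<or> k \<in> C")
    case False
    then have "E v k" "k \<in> V" "k \<in> H"
      using assms k unfolding is_clique_def by auto
    then show ?thesis
      by (simp add: nbhd_def)
  qed blast
qed

lemma card_branch_less:
  assumes "simple_graph V E" "finite H" "v \<in> H"
  shows "card (nbhd V E v \<inter> H) < card H"
proof -
  have "nbhd V E v \<inter> H \<subseteq> H - {v}"
    using assms(1) unfolding simple_graph_def nbhd_def by blast
  then have "card (nbhd V E v \<inter> H) \<le> card (H - {v})"
    using assms(2) by (intro card_mono) simp_all
  also have "\<dots> < card H"
    using assms(2,3) by (rule card_Diff1_less)
  finally show ?thesis .
qed

lemma unextendable_by_undominated:
  assumes "valid_state V E C H X" "K \<subseteq> C \<union> H" "unextendable_by V E C (H \<union> X) K" "x \<in> X"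
  shows "\<not> H \<subseteq> nbhd V E x"
proof
  assume "H \<subseteq> nbhd V E x"
  moreover have "x \<notin> K"
    using assms(2,4) valid_state_disjoint[OF assms(1)] by blast
  ultimately show False
    using unextendable_byD[OF assms(3)] assms(2,4) by blast
qed

lemma unextendable_by_base_empty:
  assumes "valid_state V E C H X" "unextendable_by V E C (H \<union> X) C"
  shows "H = {}"
proof (rule ccontr)
  assume "H \<noteq> {}"
  then obtain y where "y \<in> H" by blast
  moreover have "y \<notin> C"
    using \<open>y \<in> H\<close> valid_state_disjoint[OF assms(1)] by blast
  ultimately show False
    using unextendable_byD[OF assms(2)] by blast
qed

(* The fuel bound card H < n ensures that the recursion is never cut off. *)
lemma rec_agg_covers:
  shows "valid_state V E C H X \<Longrightarrow> card H < n \<Longrightarrow> \<rho> \<le> 1 \<Longrightarrow> is_clique V E K \<Longrightarrow>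
      C \<subseteq> K \<Longrightarrow> K \<subseteq> C \<union> H \<Longrightarrow> unextendable_by V E C (H \<union> X) K \<Longrightarrow>
      \<exists>T \<in> rec_agg n V E \<rho> H C X. K \<subseteq> T"
    and "valid_state V E C Hh Xh \<Longrightarrow> distinct vs \<Longrightarrow> set vs = Hh \<Longrightarrow> card Hh \<le> n \<Longrightarrow> \<rho> \<le> 1 \<Longrightarrow>
      is_clique V E K \<Longrightarrow> C \<subseteq> K \<Longrightarrow> K - C \<subseteq> Hh \<Longrightarrow> K - C \<noteq> {} \<Longrightarrow>
      unextendable_by V E C (Hh \<union> Xh) K \<Longrightarrow>
      \<exists>T \<in> rec_loop n V E \<rho> C vs Hh Xh S. K \<subseteq> T"
proof (induction n V E \<rho> H C X and n V E \<rho> C vs Hh Xh S rule: rec_agg_rec_loop.induct)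
  case (1 V E \<rho> H C X)
  then show ?case by simp
next
  case (2 n V E \<rho> H C X)
  have undominated: "\<not> (\<exists>x \<in> X. H \<subseteq> nbhd V E x)"
    using unextendable_by_undominated[OF "2.prems"(1,6,7)] by blast
  show ?case
  proof (cases "\<rho> \<le> density E (C \<union> H)")
    case True
    then show ?thesis
      using undominated "2.prems"(6) by simp
  next
    case sparse: False
    have "K - C \<noteq> {}"
    proof
      assume "K - C = {}"
      then have "K = C"
        using "2.prems"(5) by blast
      then have "K = C \<union> H"
        using unextendable_by_base_empty[OF "2.prems"(1)] "2.prems"(7) by simp
      then show False
        using sparse "2.prems"(3) density_clique[OF valid_state_simple_graph "2.prems"(4)] "2.prems"(1)
        by simp
    qed
    moreover have "finite H" "K - C \<subseteq> H" "card H \<le> n"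
      using valid_state_finite[OF "2.prems"(1)] "2.prems"(2,6) by auto
    ultimately have "\<exists>T \<in> rec_loop n V E \<rho> C (degen_order E H) H X {}. K \<subseteq> T"
      using "2.IH"[OF undominated sparse "2.prems"(1) distinct_degen_order set_degen_order]
        "2.prems"(3,4,5,7) by blast
    then show ?thesis
      using undominated sparse by simp
  qed
next
  case (3 n V E \<rho> C Hh Xh S)
  then show ?case by simp
next
  case (4 n V E \<rho> C v vs Hh Xh S)
  define R where "R = rec_agg n V E \<rho> (nbhd V E v \<inter> Hh) (insert v C) (Xh \<inter> nbhd V E v)"
  have v: "v \<in> Hh" "set vs = Hh - {v}" "distinct vs"
    using "4.prems"(2,3) by auto
  have graph: "simple_graph V E"
    using valid_state_simple_graph[OF "4.prems"(1)] .
  show ?case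
  proof (cases "v \<in> K")
    case True
    have "card (nbhd V E v \<inter> Hh) < n"
      using card_branch_less[OF graph _ v(1)] "4.prems"(3,4) by fastforce
    moreover have "K \<subseteq> insert v C \<union> (nbhd V E v \<inter> Hh)"
      using clique_subset_branch[OF "4.prems"(6) True] "4.prems"(7,8) by blast
    moreover have "unextendable_by V E (insert v C) (nbhd V E v \<inter> Hh \<union> Xh \<inter> nbhd V E v) K"
      by (rule unextendable_by_branch[OF graph "4.prems"(10)]) blast
    moreover have "insert v C \<subseteq> K"
      using True "4.prems"(7) by blast
    ultimately have "\<exists>T \<in> R. K \<subseteq> T"
      unfolding R_def
      using "4.IH"(1)[OF valid_state_branch[OF "4.prems"(1) v(1)]] "4.prems"(5,6) by blast
    then show ?thesis
      using rec_loop_Cons_supset[of S n V E \<rho> v Hh C Xh vs] unfolding R_def by blast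
  next
    case False
    note state' = valid_state_exclude[OF "4.prems"(1) v(1)]
    have K_sub: "K - C \<subseteq> Hh - {v}"
      using False "4.prems"(8) by blast
    have "Hh - {v} \<union> insert v Xh = Hh \<union> Xh"
      using v(1) by blast
    then have unext: "unextendable_by V E C (Hh - {v} \<union> insert v Xh) K"
      using "4.prems"(10) by simp
    have undominated: "\<not> (\<exists>x \<in> insert v Xh. Hh - {v} \<subseteq> nbhd V E x)"
      using unextendable_by_undominated[OF state' _ unext] K_sub by blast
    show ?thesis
    proof (cases "\<rho> \<le> density E (C \<union> (Hh - {v}))")
      case True
      then show ?thesis
        using rec_loop_Cons_eq[OF R_def, of vs S] undominated K_sub "4.prems"(7) by auto
    next
      case sparse: False
      have "card (Hh - {v}) \<le> n"
        using "4.prems"(4) card_Diff1_le[of Hh v] by linarith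
      then have "\<exists>T \<in> rec_loop n V E \<rho> C vs (Hh - {v}) (insert v Xh) (S \<union> R). K \<subseteq> T"
        unfolding R_def
        using "4.IH"(2)[OF refl refl refl undominated sparse state' v(3,2) _ "4.prems"(5,6,7) K_sub
            "4.prems"(9) unext]
        by blast
      then show ?thesis
        using rec_loop_Cons_eq[OF R_def, of vs S] undominated sparse by simp
    qed
  qed
qed

theorem theorem3p2:
  fixes V :: "'a::linorder set" and E :: "'a \<Rightarrow> 'a \<Rightarrow> bool" and \<rho> :: real
  assumes "simple_graph V E" and "V \<noteq> {}"
    and "0 < \<rho>" and "\<rho> \<le> 1"
  shows "dense_aggregator V E \<rho> (clique_agg V E \<rho>) \<and> inclusion_maximal (clique_agg V E \<rho>)"
proof -
  have state: "valid_state V E {} V {}"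
    using assms(1) unfolding valid_state_def by blast
  have sound: "sound_output V E \<rho> {} V {} (clique_agg V E \<rho>)"
    unfolding clique_agg_def by (rule rec_agg_sound(1)[OF state]) (use assms(2) in simp)
  have "\<exists>S \<in> clique_agg V E \<rho>. K \<subseteq> S" if clique: "is_clique V E K" for K
  proof -
    obtain M where M: "K \<subseteq> M" "is_clique V E M" "unextendable_by V E {} V M"
      using clique_extends_to_maximal[OF assms(1) clique] .
    have "\<exists>S \<in> clique_agg V E \<rho>. M \<subseteq> S"
      unfolding clique_agg_def
      by (rule rec_agg_covers(1)[OF state]) (use assms(4) M in \<open>auto simp: is_clique_def\<close>)
    then show ?thesis
      using M(1) by blast
  qed
  then show ?thesis
    using sound unfolding dense_aggregator_def sound_output_def admissible_def by auto
qed

end
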